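(* Let $\theta:\mathbb{R}^m\to(-\infty,\infty]$ be proper, convex and piecewise linear, let $\bar z\in\operatorname{dom}\partial\theta$, and let $S(\bar z)$ be the linear subspace parallel to the affine hull of $\partial\theta(\bar z)$. Then for every $\bar v\in\partial\theta(\bar z)$, $$\partial^2\theta(\bar z,\bar v)(0)=S(\bar z).$$
   Context: $\theta$ is (convex) piecewise linear if it is convex, proper, and its domain is a union of finitely many polyhedral sets on each of which $\theta$ is affine (equivalently, its epigraph is polyhedral). For convex $\theta$, $\partial\theta$ is the convex-analysis subdifferential. For $\Omega$ and $\bar x\in\Omega$: $\hat N(\bar x;\Omega)=\{v:\limsup_{x\to\bar x,\,x\in\Omega}\langle v,x-\bar x\rangle/\|x-\bar x\|\le0\}$, and the limiting normal cone $N(\bar x;\Omega)$ = limits of $v_k\in\hat N(x_k;\Omega)$, $x_k\to\bar x$ in $\Omega$. Coderivative: $D^*F(\bar x,\bar y)(v)=\{u:(u,-v)\in N((\bar x,\bar y);\operatorname{gph}F)\}$. Second-order subdifferential: $\partial^2\theta(\bar z,\bar v)(u):=D^*(\partial\theta)(\bar z,\bar v)(u)$. *)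

theory Defs
  imports "HOL-Analysis.Analysis" "HOL-Library.Extended_Real"
begin

definition edom :: "('a \<Rightarrow> ereal) \<Rightarrow> 'a set" where
  "edom \<theta> = {x. \<theta> x < \<infinity>}"

definition proper_fun :: "('a \<Rightarrow> ereal) \<Rightarrow> bool" where
  "proper_fun \<theta> \<longleftrightarrow> (\<forall>x. \<theta> x \<noteq> -\<infinity>) \<and> (\<exists>x. \<theta> x \<noteq> \<infinity>)"

definition convex_efun :: "('a::real_vector \<Rightarrow> ereal) \<Rightarrow> bool" where
  "convex_efun \<theta> \<longleftrightarrow> convex {(x, t::real). \<theta> x \<le> ereal t}"

definition piecewise_linear :: "('a::euclidean_space \<Rightarrow> ereal) \<Rightarrow> bool" where
  "piecewise_linear \<theta> \<longleftrightarrow> convex_efun \<theta> \<and> proper_fun \<theta> \<and>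
     (\<exists>P. finite P \<and> edom \<theta> = \<Union>P \<and>
        (\<forall>C\<in>P. polyhedron C \<and> (\<exists>a b. \<forall>x\<in>C. \<theta> x = ereal (a \<bullet> x + b))))"

definition subdiff :: "('a::real_inner \<Rightarrow> ereal) \<Rightarrow> 'a \<Rightarrow> 'a set" where
  "subdiff \<theta> z = {v. \<bar>\<theta> z\<bar> \<noteq> \<infinity> \<and>
      (\<forall>x. \<theta> z + ereal (v \<bullet> (x - z)) \<le> \<theta> x)}"

definition dom_subdiff :: "('a::real_inner \<Rightarrow> ereal) \<Rightarrow> 'a set" where
  "dom_subdiff \<theta> = {z. subdiff \<theta> z \<noteq> {}}"

definition regular_normal :: "'a::real_inner set \<Rightarrow> 'a \<Rightarrow> 'a set" where
  "regular_normal \<Omega> xb = {v. xb \<in> \<Omega> \<and>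
      (\<forall>e>0. \<exists>d>0. \<forall>x\<in>\<Omega>. norm (x - xb) < d \<longrightarrow> v \<bullet> (x - xb) \<le> e * norm (x - xb))}"

definition limiting_normal :: "'a::real_inner set \<Rightarrow> 'a \<Rightarrow> 'a set" where
  "limiting_normal \<Omega> xb = {v. xb \<in> \<Omega> \<and> (\<exists>xs vs. (\<forall>k. xs k \<in> \<Omega> \<and> vs k \<in> regular_normal \<Omega> (xs k))
      \<and> xs \<longlonglongrightarrow> xb \<and> vs \<longlonglongrightarrow> v)}"

definition coderiv :: "('a::real_inner \<Rightarrow> 'b::real_inner set) \<Rightarrow> 'a \<Rightarrow> 'b \<Rightarrow> 'b \<Rightarrow> 'a set" where
  "coderiv F xb yb v = {u. (u, -v) \<in> limiting_normal {(x, y). y \<in> F x} (xb, yb)}"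

definition second_subdiff :: "('a::real_inner \<Rightarrow> ereal) \<Rightarrow> 'a \<Rightarrow> 'a \<Rightarrow> 'a \<Rightarrow> 'a set" where
  "second_subdiff \<theta> zb vb u = coderiv (subdiff \<theta>) zb vb u"

definition parallel_subspace :: "'a::real_vector set \<Rightarrow> 'a set" where
  "parallel_subspace A = {x - y | x y. x \<in> affine hull A \<and> y \<in> affine hull A}"

end

theory Submission
  imports Defs
begin

text \<open>
  \<open>\<supseteq>\<close>: this holds for every function.  At a point \<open>w\<close> of the relative interior of
  \<open>K\<close> one can step from \<open>w\<close> into \<open>K\<close> in every direction \<open>u \<in> S\<close>, and monotonicity
  of the subdifferential then makes \<open>(u, 0)\<close> a regular normal to the graph of
  \<open>\<partial>\<theta>\<close> at \<open>(zb, w)\<close>; such \<open>w\<close> approximate \<open>vb\<close>, so \<open>(u, 0)\<close> is a limiting normal.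

  \<open>\<subseteq>\<close>: near \<open>zb\<close> a piecewise linear function is conic, \<open>\<theta>(zb + s h) - \<theta>(zb) =
  s (\<theta>(zb + h) - \<theta>(zb))\<close> for \<open>0 < s \<le> 1\<close>, and its epigraph is closed.  Separating from the closed convex
  cone \<open>tangent_epigraph\<close> (the epigraph of the directional derivative) shows that
  \<open>\<theta>\<close> is linear along every direction \<open>x\<close> orthogonal to \<open>K - vb\<close>; hence near \<open>zb\<close>
  subgradients are preserved when moving along \<open>\<plusminus>x\<close>, regular normals to the graph
  vanish on \<open>x\<close>, and so does every \<open>u \<in> \<partial>\<^sup>2\<theta>(zb, vb)(0)\<close>.  Thus \<open>u \<in> (K - vb)\<^sup>\<bottom>\<^sup>\<bottom> = S\<close>.
\<close>

lemma subdiffD: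
  assumes "v \<in> subdiff \<theta> z"
  obtains Z where "\<theta> z = ereal Z" "\<And>x. ereal (Z + v \<bullet> (x - z)) \<le> \<theta> x"
proof -
  from assms have "\<bar>\<theta> z\<bar> \<noteq> \<infinity>" and ineq: "\<And>x. \<theta> z + ereal (v \<bullet> (x - z)) \<le> \<theta> x"
    unfolding subdiff_def by auto
  then obtain Z where Z: "\<theta> z = ereal Z" by (cases "\<theta> z") auto
  show ?thesis using that[OF Z] ineq Z by simp
qed

lemma subdiffI:
  assumes "\<theta> z = ereal Z" "\<And>x. ereal (Z + v \<bullet> (x - z)) \<le> \<theta> x"
  shows "v \<in> subdiff \<theta> z"
  using assms unfolding subdiff_def by auto

lemma subdiff_not_MInf:
  assumes "v \<in> subdiff \<theta> z"
  shows "\<theta> y \<noteq> -\<infinity>"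
  using assms by (elim subdiffD) (metis MInfty_neq_ereal(1) ereal_infty_less_eq(2))

lemma subdiff_monotone:
  assumes "v \<in> subdiff \<theta> z" "v' \<in> subdiff \<theta> z'"
  shows "(v - v') \<bullet> (z - z') \<ge> 0"
proof -
  obtain Z where Z: "\<theta> z = ereal Z" "\<And>x. ereal (Z + v \<bullet> (x - z)) \<le> \<theta> x"
    using subdiffD[OF assms(1)] by blast
  obtain Z' where Z': "\<theta> z' = ereal Z'" "\<And>x. ereal (Z' + v' \<bullet> (x - z')) \<le> \<theta> x"
    using subdiffD[OF assms(2)] by blast
  have "Z + v \<bullet> (z' - z) \<le> Z'" "Z' + v' \<bullet> (z - z') \<le> Z"
    using Z(2)[of z'] Z'(2)[of z] Z(1) Z'(1) by simp_all
  then show ?thesis by (simp add: inner_diff_left inner_diff_right algebra_simps)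
qed

lemma subdiff_convex: "convex (subdiff \<theta> z)"
proof (rule convexI)
  fix v1 v2 and a b :: real
  assume v: "v1 \<in> subdiff \<theta> z" "v2 \<in> subdiff \<theta> z" and ab: "0 \<le> a" "0 \<le> b" "a + b = 1"
  obtain Z where Z: "\<theta> z = ereal Z" "\<And>x. ereal (Z + v1 \<bullet> (x - z)) \<le> \<theta> x"
    using subdiffD[OF v(1)] by blast
  obtain Z2 where Z2: "\<theta> z = ereal Z2" "\<And>x. ereal (Z2 + v2 \<bullet> (x - z)) \<le> \<theta> x"
    using subdiffD[OF v(2)] by blast
  show "a *\<^sub>R v1 + b *\<^sub>R v2 \<in> subdiff \<theta> z"
  proof (rule subdiffI[where \<theta> = \<theta>, OF Z(1)])
    fix y
    show "ereal (Z + (a *\<^sub>R v1 + b *\<^sub>R v2) \<bullet> (y - z)) \<le> \<theta> y"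
    proof (cases "\<theta> y")
      case (real Y)
      have "Z + v1 \<bullet> (y - z) \<le> Y" "Z + v2 \<bullet> (y - z) \<le> Y"
        using Z(2)[of y] Z2(2)[of y] Z(1) Z2(1) real by auto
      then have "a * (Z + v1 \<bullet> (y - z)) + b * (Z + v2 \<bullet> (y - z)) \<le> a * Y + b * Y"
        using ab by (intro add_mono mult_left_mono) auto
      moreover have b: "b = 1 - a" using ab(3) by simp
      ultimately show ?thesis
        using real by (simp add: b inner_add_left algebra_simps)
    qed (use Z(2)[of y] in auto)
  qed
qed

lemma subgradient_persists:
  assumes v: "v \<in> subdiff \<theta> z" and Z: "\<theta> z = ereal Z" and up: "\<theta> (z + y) \<le> ereal (Z + v \<bullet> y)"
  shows "v \<in> subdiff \<theta> (z + y)"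
proof -
  obtain Z' where Z': "\<theta> z = ereal Z'" "\<And>x. ereal (Z' + v \<bullet> (x - z)) \<le> \<theta> x"
    using subdiffD[OF v] by blast
  have "ereal (Z + v \<bullet> y) \<le> \<theta> (z + y)" using Z'(2)[of "z + y"] Z Z'(1) by simp
  then have val: "\<theta> (z + y) = ereal (Z + v \<bullet> y)" using up by (rule antisym[rotated])
  show ?thesis
  proof (rule subdiffI[where \<theta> = \<theta>, OF val])
    fix x
    have "Z + v \<bullet> y + v \<bullet> (x - (z + y)) = Z + v \<bullet> (x - z)"
      by (simp add: inner_diff_right inner_add_right)
    then show "ereal (Z + v \<bullet> y + v \<bullet> (x - (z + y))) \<le> \<theta> x"
      using Z'(2)[of x] Z Z'(1) by (simp add: add.assoc)
  qed
qed

lemma convex_efunD: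
  assumes "convex_efun \<theta>" "0 \<le> \<mu>" "\<mu> \<le> 1" "\<theta> a \<le> ereal ra" "\<theta> b \<le> ereal rb"
  shows "\<theta> ((1 - \<mu>) *\<^sub>R a + \<mu> *\<^sub>R b) \<le> ereal ((1 - \<mu>) * ra + \<mu> * rb)"
proof -
  let ?epi = "{(x, t::real). \<theta> x \<le> ereal t}"
  have "(1 - \<mu>) *\<^sub>R (a, ra) + \<mu> *\<^sub>R (b, rb) \<in> ?epi"
    using assms unfolding convex_efun_def by (intro convexD) auto
  then show ?thesis by simp
qed

lemma local_subgradient_is_global:
  fixes \<theta> :: "'a::real_inner \<Rightarrow> ereal"
  assumes cvx: "convex_efun \<theta>" and T: "\<theta> z = ereal T" and no_MInf: "\<And>y. \<theta> y \<noteq> -\<infinity>"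
    and \<delta>: "\<delta> > 0" and local: "\<And>h. norm h < \<delta> \<Longrightarrow> ereal (T + w \<bullet> h) \<le> \<theta> (z + h)"
  shows "w \<in> subdiff \<theta> z"
proof (rule subdiffI[where \<theta> = \<theta>, OF T])
  fix y
  show "ereal (T + w \<bullet> (y - z)) \<le> \<theta> y"
  proof (cases "\<theta> y")
    case (real Y)
    define e where "e = min 1 (\<delta> / (2 * (norm (y - z) + 1)))"
    have pos: "2 * (norm (y - z) + 1) > 0" by (smt (verit) norm_ge_zero)
    then have e: "0 < e" "e \<le> 1" unfolding e_def using \<delta> by simp_all
    have "e * norm (y - z) \<le> \<delta> / (2 * (norm (y - z) + 1)) * (norm (y - z) + 1)"
      unfolding e_def using \<delta> pos by (intro mult_mono divide_nonneg_pos) auto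
    also have "\<dots> = \<delta> / 2" using pos by (simp add: field_simps)
    also have "\<dots> < \<delta>" using \<delta> by simp
    finally have near: "norm (e *\<^sub>R (y - z)) < \<delta>" using e by simp
    have "\<theta> ((1 - e) *\<^sub>R z + e *\<^sub>R y) \<le> ereal ((1 - e) * T + e * Y)"
      using convex_efunD[OF cvx, of e z T y Y] e T real by simp
    moreover have "(1 - e) *\<^sub>R z + e *\<^sub>R y = z + e *\<^sub>R (y - z)" by (simp add: algebra_simps)
    ultimately have "ereal (T + w \<bullet> (e *\<^sub>R (y - z))) \<le> ereal ((1 - e) * T + e * Y)"
      using local[OF near] by (metis order.trans)
    then have "e * (T + w \<bullet> (y - z)) \<le> e * Y" by (simp add: algebra_simps)
    then show ?thesis using e real by simp
  qed (use no_MInf in auto)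
qed

lemma regular_normal_direction:
  assumes q: "q \<in> regular_normal G p" and \<eta>: "\<eta> > 0"
    and ray: "\<And>t. 0 < t \<Longrightarrow> t < \<eta> \<Longrightarrow> p + t *\<^sub>R d \<in> G"
  shows "q \<bullet> d \<le> 0"
proof (rule field_le_epsilon)
  fix e :: real assume e: "e > 0"
  define e' where "e' = e / (norm d + 1)"
  have e': "e' > 0" "e' * norm d \<le> e"
    unfolding e'_def using e by (simp_all add: add_pos_nonneg field_simps)
  obtain dd where dd: "dd > 0" "\<And>x. x \<in> G \<Longrightarrow> norm (x - p) < dd \<Longrightarrow> q \<bullet> (x - p) \<le> e' * norm (x - p)"
    using q e'(1) unfolding regular_normal_def by blast
  define t where "t = min (\<eta> / 2) (dd / (2 * (norm d + 1)))"
  have pos: "2 * (norm d + 1) > 0" by (smt (verit) norm_ge_zero)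
  then have t: "0 < t" "t < \<eta>" unfolding t_def using \<eta> dd by simp_all
  have "t * norm d \<le> dd / (2 * (norm d + 1)) * (norm d + 1)"
    unfolding t_def using dd(1) pos by (intro mult_mono divide_nonneg_pos) auto
  also have "\<dots> = dd / 2" using pos by (simp add: field_simps)
  also have "\<dots> < dd" using dd by simp
  finally have "norm ((p + t *\<^sub>R d) - p) < dd" using t by simp
  then have "q \<bullet> ((p + t *\<^sub>R d) - p) \<le> e' * norm ((p + t *\<^sub>R d) - p)"
    using dd ray[OF t] by blast
  then have "t * (q \<bullet> d) \<le> t * (e' * norm d)" using t by (simp add: algebra_simps)
  then show "q \<bullet> d \<le> 0 + e" using t e' by simp
qed

lemma rel_interior_step_in_parallel_direction:
  fixes K :: "'a::euclidean_space set"
  assumes w: "w \<in> rel_interior K" and u: "u \<in> parallel_subspace K"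
  obtains \<epsilon> where "\<epsilon> > 0" "w + \<epsilon> *\<^sub>R u \<in> K"
proof -
  obtain e where e: "e > 0" "ball w e \<inter> affine hull K \<subseteq> K" "w \<in> K"
    using w unfolding rel_interior_ball by blast
  obtain p q where pq: "u = p - q" "p \<in> affine hull K" "q \<in> affine hull K"
    using u unfolding parallel_subspace_def by blast
  define \<epsilon> where "\<epsilon> = e / (2 * (norm u + 1))"
  have pos: "2 * (norm u + 1) > 0" by (smt (verit) norm_ge_zero)
  then have \<epsilon>: "\<epsilon> > 0" unfolding \<epsilon>_def using e by simp
  have "norm (\<epsilon> *\<^sub>R u) \<le> \<epsilon> * (norm u + 1)" using \<epsilon> by simp
  also have "\<dots> = e / 2" unfolding \<epsilon>_def using pos by (simp add: field_simps)
  finally have "w + \<epsilon> *\<^sub>R u \<in> ball w e" using e by (simp add: dist_norm)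
  moreover have "w + \<epsilon> *\<^sub>R u \<in> affine hull K"
    unfolding pq(1) by (rule mem_affine_3_minus[OF affine_affine_hull hull_inc[OF e(3)] pq(2,3)])
  ultimately show ?thesis using that \<epsilon> e(2) by blast
qed

text \<open>At relative interior points \<open>w\<close> of \<open>\<partial>\<theta>(z)\<close>, every \<open>(u, 0)\<close> with \<open>u\<close> parallel to
  \<open>\<partial>\<theta>(z)\<close> is a regular normal to the graph of \<open>\<partial>\<theta>\<close>: this is monotonicity of \<open>\<partial>\<theta>\<close>
  tested against the subgradient \<open>w + \<epsilon>u \<in> \<partial>\<theta>(z)\<close>.\<close>
lemma regular_normal_graph_at_rel_interior:
  fixes \<theta> :: "'a::euclidean_space \<Rightarrow> ereal"
  assumes w: "w \<in> rel_interior (subdiff \<theta> z)" and u: "u \<in> parallel_subspace (subdiff \<theta> z)"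
  shows "(u, 0) \<in> regular_normal {(x, y). y \<in> subdiff \<theta> x} (z, w)"
proof -
  obtain \<epsilon> where \<epsilon>: "\<epsilon> > 0" "w + \<epsilon> *\<^sub>R u \<in> subdiff \<theta> z"
    using rel_interior_step_in_parallel_direction[OF w u] by blast
  have bound: "u \<bullet> (x - z) \<le> e * norm (x - z, y - w)"
    if e: "e > 0" and y: "y \<in> subdiff \<theta> x" and near: "norm (x - z, y - w) < e * \<epsilon>" for e x y
  proof -
    have "0 \<le> (y - (w + \<epsilon> *\<^sub>R u)) \<bullet> (x - z)" by (rule subdiff_monotone[OF y \<epsilon>(2)])
    then have "\<epsilon> * (u \<bullet> (x - z)) \<le> (y - w) \<bullet> (x - z)" by (simp add: inner_diff_left algebra_simps)
    also have "\<dots> \<le> norm (y - w) * norm (x - z)" by (rule norm_cauchy_schwarz)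
    also have "\<dots> \<le> (e * \<epsilon>) * norm (x - z, y - w)"
      using norm_snd_le[of "y - w" "x - z"] norm_fst_le[of "x - z" "y - w"] near e \<epsilon>(1)
      by (intro mult_mono) auto
    finally have "\<epsilon> * (u \<bullet> (x - z)) \<le> \<epsilon> * (e * norm (x - z, y - w))"
      by (simp add: algebra_simps)
    then show ?thesis using \<epsilon>(1) by simp
  qed
  have "w \<in> subdiff \<theta> z" using w rel_interior_subset by blast
  moreover have "\<exists>d>0. \<forall>(x, y)\<in>{(x, y). y \<in> subdiff \<theta> x}. norm ((x, y) - (z, w)) < d \<longrightarrow>
      (u, 0) \<bullet> ((x, y) - (z, w)) \<le> e * norm ((x, y) - (z, w))" if "e > 0" for e
    using bound[OF that] that \<epsilon>(1) by (intro exI[where x = "e * \<epsilon>"]) auto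
  ultimately show ?thesis unfolding regular_normal_def by blast
qed

lemma parallel_subspace_subset_second_subdiff:
  fixes \<theta> :: "'a::euclidean_space \<Rightarrow> ereal"
  assumes vb: "vb \<in> subdiff \<theta> zb"
  shows "parallel_subspace (subdiff \<theta> zb) \<subseteq> second_subdiff \<theta> zb vb 0"
proof
  fix u assume u: "u \<in> parallel_subspace (subdiff \<theta> zb)"
  let ?G = "{(x, y). y \<in> subdiff \<theta> x}"
  have "vb \<in> closure (rel_interior (subdiff \<theta> zb))"
    using convex_closure_rel_interior[OF subdiff_convex] closure_subset vb by blast
  then obtain ws where ws: "\<And>n. ws n \<in> rel_interior (subdiff \<theta> zb)" "ws \<longlonglongrightarrow> vb"
    unfolding closure_sequential by blast
  have "\<forall>n. (zb, ws n) \<in> ?G \<and> (u, 0) \<in> regular_normal ?G (zb, ws n)"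
    using ws(1) rel_interior_subset regular_normal_graph_at_rel_interior[OF _ u] by blast
  moreover have "(\<lambda>n. (zb, ws n)) \<longlonglongrightarrow> (zb, vb)" by (intro tendsto_intros ws(2))
  ultimately have "\<exists>xs vs. (\<forall>k. xs k \<in> ?G \<and> vs k \<in> regular_normal ?G (xs k))
      \<and> xs \<longlonglongrightarrow> (zb, vb) \<and> vs \<longlonglongrightarrow> (u, - 0)"
    by (intro exI[where x = "\<lambda>n. (zb, ws n)"] exI[where x = "\<lambda>n. (u, 0)"]) simp
  then have "(u, - 0) \<in> limiting_normal ?G (zb, vb)"
    unfolding limiting_normal_def using vb by simp
  then show "u \<in> second_subdiff \<theta> zb vb 0"
    unfolding second_subdiff_def coderiv_def by simp
qed

lemma parallel_subspace_by_orthogonality: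
  fixes K :: "'a::euclidean_space set"
  assumes vb: "vb \<in> K" and orth: "\<And>x. \<forall>v\<in>K. (v - vb) \<bullet> x = 0 \<Longrightarrow> u \<bullet> x = 0"
  shows "u \<in> parallel_subspace K"
proof -
  define D where "D = {v - vb | v. v \<in> K - {vb}}"
  obtain y x where yx: "y \<in> span D" "\<And>w. w \<in> span D \<Longrightarrow> orthogonal x w" "u = y + x"
    using orthogonal_subspace_decomp_exists[of D u] by blast
  have "v - vb \<in> span D" if "v \<in> K" for v
    using that unfolding D_def by (cases "v = vb") (auto simp: span_zero intro: span_base)
  then have "\<forall>v\<in>K. (v - vb) \<bullet> x = 0"
    using yx(2) by (metis orthogonal_def inner_commute)
  then have "u \<bullet> x = 0" by (rule orth)
  moreover have "y \<bullet> x = 0" using yx(2)[OF yx(1)] by (metis orthogonal_def inner_commute)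
  ultimately have "x \<bullet> x = 0" using yx(3) by (simp add: inner_add_left)
  then have "vb + u \<in> affine hull K"
    using yx affine_hull_span[OF vb] unfolding D_def by auto
  moreover have "vb \<in> affine hull K" using vb by (simp add: hull_inc)
  ultimately show ?thesis unfolding parallel_subspace_def by force
qed

lemma halfspace_local_cone:
  fixes a z :: "'a::real_inner"
  assumes "a \<bullet> z \<le> b"
  shows "\<forall>\<^sub>F h in nhds 0. \<forall>s. 0 < s \<longrightarrow> s \<le> 1 \<longrightarrow> (a \<bullet> (z + s *\<^sub>R h) \<le> b \<longleftrightarrow> a \<bullet> (z + h) \<le> b)"
proof (cases "a \<bullet> z = b")
  case True
  then show ?thesis by (simp add: inner_add_right mult_le_0_iff)
next
  case False
  have "((\<lambda>h. a \<bullet> h) \<longlongrightarrow> a \<bullet> 0) (nhds 0)" by (intro tendsto_intros filterlim_ident)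
  then have "\<forall>\<^sub>F h in nhds 0. a \<bullet> h < b - a \<bullet> z"
    using False assms by (intro order_tendstoD(2)) auto
  then show ?thesis
  proof (rule eventually_mono, intro allI impI)
    fix h and s :: real assume h: "a \<bullet> h < b - a \<bullet> z" and s: "0 < s" "s \<le> 1"
    have "s * (a \<bullet> h) < b - a \<bullet> z"
      using h s False assms by (smt (verit) mult_left_le_one_le mult_pos_neg)
    then show "a \<bullet> (z + s *\<^sub>R h) \<le> b \<longleftrightarrow> a \<bullet> (z + h) \<le> b"
      using h by (simp add: inner_add_right)
  qed
qed

lemma polyhedron_local_cone:
  fixes C :: "'a::euclidean_space set"
  assumes C: "polyhedron C"
  shows "\<forall>\<^sub>F h in nhds 0. \<forall>s. 0 < s \<longrightarrow> s \<le> 1 \<longrightarrow> (z + s *\<^sub>R h \<in> C \<longleftrightarrow> z + h \<in> C \<and> z \<in> C)"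
proof (cases "z \<in> C")
  case True
  obtain F where F: "finite F" "C = \<Inter>F" "\<And>H. H \<in> F \<Longrightarrow> \<exists>a b. a \<noteq> 0 \<and> H = {x. a \<bullet> x \<le> b}"
    using C unfolding polyhedron_def by blast
  have "\<forall>\<^sub>F h in nhds 0. \<forall>H\<in>F. \<forall>s. 0 < s \<longrightarrow> s \<le> 1 \<longrightarrow> (z + s *\<^sub>R h \<in> H \<longleftrightarrow> z + h \<in> H)"
  proof (rule eventually_ball_finite[OF F(1)], rule ballI)
    fix H assume H: "H \<in> F"
    then obtain a b where ab: "H = {x. a \<bullet> x \<le> b}" using F(3) by blast
    then have "a \<bullet> z \<le> b" using H F(2) True by auto
    then show "\<forall>\<^sub>F h in nhds 0. \<forall>s. 0 < s \<longrightarrow> s \<le> 1 \<longrightarrow> (z + s *\<^sub>R h \<in> H \<longleftrightarrow> z + h \<in> H)"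
      unfolding ab by (simp add: halfspace_local_cone)
  qed
  then show ?thesis by eventually_elim (use True F(2) in blast)
next
  case False
  obtain e where e: "e > 0" "ball z e \<subseteq> - C"
    using False open_contains_ball polyhedron_imp_closed[OF C] by (metis ComplI open_Compl)
  have "z + s *\<^sub>R h \<notin> C" if "norm h < e" "0 < s" "s \<le> 1" for h and s :: real
  proof -
    have "norm (s *\<^sub>R h) < e" using that by (smt (verit) mult_left_le_one_le norm_ge_zero norm_scaleR)
    then have "z + s *\<^sub>R h \<in> ball z e" by (simp add: dist_norm)
    then show ?thesis using e(2) by blast
  qed
  then show ?thesis
    unfolding eventually_nhds_metric using e(1) False by (auto simp: dist_norm)
qed

lemma piecewise_linear_pieces:
  fixes \<theta> :: "'a::euclidean_space \<Rightarrow> ereal"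
  assumes "piecewise_linear \<theta>"
  obtains P A B where "finite P" "\<And>C. C \<in> P \<Longrightarrow> polyhedron C"
    "\<And>C y. C \<in> P \<Longrightarrow> y \<in> C \<Longrightarrow> \<theta> y = ereal (A C \<bullet> y + B C)"
    "\<And>y t. \<theta> y \<le> ereal t \<longleftrightarrow> (\<exists>C\<in>P. y \<in> C \<and> A C \<bullet> y + B C \<le> t)"
proof -
  obtain P where P: "finite P" "edom \<theta> = \<Union>P"
      "\<forall>C\<in>P. polyhedron C \<and> (\<exists>a b. \<forall>x\<in>C. \<theta> x = ereal (a \<bullet> x + b))"
    using assms unfolding piecewise_linear_def by blast
  then have "\<forall>C\<in>P. \<exists>ab. \<forall>y\<in>C. \<theta> y = ereal (fst ab \<bullet> y + snd ab)" by auto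
  then obtain ab where ab: "\<forall>C\<in>P. \<forall>y\<in>C. \<theta> y = ereal (fst (ab C) \<bullet> y + snd (ab C))"
    by (rule bchoice[elim_format]) blast
  define A where "A C = fst (ab C)" for C
  define B where "B C = snd (ab C)" for C
  have AB: "\<And>C y. C \<in> P \<Longrightarrow> y \<in> C \<Longrightarrow> \<theta> y = ereal (A C \<bullet> y + B C)"
    using ab unfolding A_def B_def by blast
  have "\<theta> y \<le> ereal t \<longleftrightarrow> (\<exists>C\<in>P. y \<in> C \<and> A C \<bullet> y + B C \<le> t)" for y t
  proof
    assume le: "\<theta> y \<le> ereal t"
    then have "y \<in> edom \<theta>" unfolding edom_def by (cases "\<theta> y") auto
    then obtain C where "C \<in> P" "y \<in> C" using P(2) by auto
    then show "\<exists>C\<in>P. y \<in> C \<and> A C \<bullet> y + B C \<le> t" using AB le by force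
  qed (use AB in force)
  moreover have "\<And>C. C \<in> P \<Longrightarrow> polyhedron C" using P(3) by blast
  ultimately show ?thesis using that[OF P(1)] AB by blast
qed

text \<open>The epigraph is a finite union of closed sets.\<close>
lemma piecewise_linear_closed_epigraph:
  fixes \<theta> :: "'a::euclidean_space \<Rightarrow> ereal"
  assumes "piecewise_linear \<theta>"
  shows "closed {p. \<theta> (fst p) \<le> ereal (snd p)}"
proof -
  obtain P A B where P: "finite P" "\<And>C. C \<in> P \<Longrightarrow> polyhedron C"
    and "\<And>C y. C \<in> P \<Longrightarrow> y \<in> C \<Longrightarrow> \<theta> y = ereal (A C \<bullet> y + B C)"
    and epi: "\<And>y t. \<theta> y \<le> ereal t \<longleftrightarrow> (\<exists>C\<in>P. y \<in> C \<and> A C \<bullet> y + B C \<le> t)"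
    using piecewise_linear_pieces[OF assms] by metis
  have "{p. \<theta> (fst p) \<le> ereal (snd p)} = (\<Union>C\<in>P. fst -` C \<inter> {p. A C \<bullet> fst p + B C \<le> snd p})"
    using epi by auto
  moreover have "closed (fst -` C \<inter> {p :: 'a \<times> real. A C \<bullet> fst p + B C \<le> snd p})" if "C \<in> P" for C
    using P(2)[OF that] by (intro closed_Int closed_vimage_fst polyhedron_imp_closed closed_Collect_le)
      (auto intro!: continuous_intros)
  ultimately show ?thesis using P(1) by (auto intro: closed_UN)
qed

lemma piecewise_linear_locally_conic:
  fixes \<theta> :: "'a::euclidean_space \<Rightarrow> ereal"
  assumes "piecewise_linear \<theta>" and T: "\<theta> z = ereal T"
  obtains \<delta> where "\<delta> > 0" "\<And>h s r. norm h < \<delta> \<Longrightarrow> 0 < s \<Longrightarrow> s \<le> 1 \<Longrightarrow>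
      \<theta> (z + s *\<^sub>R h) \<le> ereal (T + s * r) \<longleftrightarrow> \<theta> (z + h) \<le> ereal (T + r)"
proof -
  obtain P A B where P: "finite P" "\<And>C. C \<in> P \<Longrightarrow> polyhedron C"
    and aff: "\<And>C y. C \<in> P \<Longrightarrow> y \<in> C \<Longrightarrow> \<theta> y = ereal (A C \<bullet> y + B C)"
    and epi: "\<And>y t. \<theta> y \<le> ereal t \<longleftrightarrow> (\<exists>C\<in>P. y \<in> C \<and> A C \<bullet> y + B C \<le> t)"
    using piecewise_linear_pieces[OF assms(1)] by metis
  have "\<forall>C\<in>P. \<forall>\<^sub>F h in nhds 0. \<forall>s. 0 < s \<longrightarrow> s \<le> 1 \<longrightarrow> (z + s *\<^sub>R h \<in> C \<longleftrightarrow> z + h \<in> C \<and> z \<in> C)"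
    by (simp add: P(2) polyhedron_local_cone)
  then have "\<forall>\<^sub>F h in nhds 0. \<forall>C\<in>P. \<forall>s. 0 < s \<longrightarrow> s \<le> 1 \<longrightarrow> (z + s *\<^sub>R h \<in> C \<longleftrightarrow> z + h \<in> C \<and> z \<in> C)"
    by (rule eventually_ball_finite[OF P(1)])
  then obtain \<delta> where \<delta>: "\<delta> > 0" and cone: "\<And>h C s. norm h < \<delta> \<Longrightarrow> C \<in> P \<Longrightarrow> 0 < s \<Longrightarrow>
      s \<le> 1 \<Longrightarrow> z + s *\<^sub>R h \<in> C \<longleftrightarrow> z + h \<in> C \<and> z \<in> C"
    unfolding eventually_nhds_metric dist_norm diff_zero by blast
  have value_at_z: "A C \<bullet> z + B C = T" if "C \<in> P" "z \<in> C" for C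
    using aff[OF that] T by simp
  have slope: "\<theta> (z + s *\<^sub>R h) \<le> ereal (T + s * r) \<longleftrightarrow> (\<exists>C\<in>P. z \<in> C \<and> z + h \<in> C \<and> A C \<bullet> h \<le> r)"
    if h: "norm h < \<delta>" and s: "0 < s" "s \<le> 1" for h s r
  proof -
    have "z + s *\<^sub>R h \<in> C \<and> A C \<bullet> (z + s *\<^sub>R h) + B C \<le> T + s * r \<longleftrightarrow>
        z \<in> C \<and> z + h \<in> C \<and> A C \<bullet> h \<le> r" if C: "C \<in> P" for C
    proof (cases "z \<in> C \<and> z + h \<in> C")
      case True
      then have "A C \<bullet> (z + s *\<^sub>R h) + B C = T + s * (A C \<bullet> h)"
        using value_at_z[OF C] by (simp add: inner_add_right)
      then show ?thesis using True cone[OF h C s] s by auto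
    next
      case False
      then show ?thesis using cone[OF h C s] by blast
    qed
    then show ?thesis unfolding epi by blast
  qed
  show ?thesis
  proof (rule that[OF \<delta>])
    fix h :: 'a and s r :: real assume "norm h < \<delta>" "0 < s" "s \<le> 1"
    then show "\<theta> (z + s *\<^sub>R h) \<le> ereal (T + s * r) \<longleftrightarrow> \<theta> (z + h) \<le> ereal (T + r)"
      using slope[of h s r] slope[of h 1 r] by simp
  qed
qed

locale locally_conic =
  fixes \<theta> :: "'a::euclidean_space \<Rightarrow> ereal" and zb :: 'a and T \<delta> :: real
  assumes convex: "convex_efun \<theta>"
    and closed_epigraph: "closed {p. \<theta> (fst p) \<le> ereal (snd p)}"
    and value_at_zb: "\<theta> zb = ereal T"
    and delta_pos: "\<delta> > 0"
    and conic: "\<And>h s r. norm h < \<delta> \<Longrightarrow> 0 < s \<Longrightarrow> s \<le> 1 \<Longrightarrow>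
      \<theta> (zb + s *\<^sub>R h) \<le> ereal (T + s * r) \<longleftrightarrow> \<theta> (zb + h) \<le> ereal (T + r)"
begin

text \<open>The epigraph of the directional derivative of \<open>\<theta>\<close> at \<open>zb\<close>, described through the
  conic neighbourhood of \<open>zb\<close>; it is a closed convex cone.\<close>
definition tangent_epigraph :: "('a \<times> real) set" where
  "tangent_epigraph = {(h, r). \<forall>s>0. s * norm h < \<delta> \<longrightarrow> \<theta> (zb + s *\<^sub>R h) \<le> ereal (T + s * r)}"

lemma conic_scale:
  assumes "norm h < \<delta>" "norm (c *\<^sub>R h) < \<delta>" "0 < c" "\<theta> (zb + h) \<le> ereal (T + r)"
  shows "\<theta> (zb + c *\<^sub>R h) \<le> ereal (T + c * r)"
proof (cases "c \<le> 1")
  case True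
  then show ?thesis using conic assms by blast
next
  case False
  have "\<theta> (zb + (1 / c) *\<^sub>R (c *\<^sub>R h)) \<le> ereal (T + (1 / c) * (c * r)) \<longleftrightarrow>
      \<theta> (zb + c *\<^sub>R h) \<le> ereal (T + c * r)"
    using False assms by (intro conic) auto
  then show ?thesis using assms by simp
qed

lemma tangent_epigraph_mem:
  assumes "norm h < \<delta>" "\<theta> (zb + h) \<le> ereal (T + r)"
  shows "(h, r) \<in> tangent_epigraph"
  unfolding tangent_epigraph_def using assms conic_scale by auto

lemma tangent_epigraph_zero: "0 \<le> r \<Longrightarrow> (0, r) \<in> tangent_epigraph"
  unfolding tangent_epigraph_def using value_at_zb by auto

lemma tangent_epigraph_cone:
  assumes "(h, r) \<in> tangent_epigraph" "c > 0"
  shows "(c *\<^sub>R h, c * r) \<in> tangent_epigraph"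
proof -
  have H: "\<And>s. 0 < s \<Longrightarrow> s * norm h < \<delta> \<Longrightarrow> \<theta> (zb + s *\<^sub>R h) \<le> ereal (T + s * r)"
    using assms(1) unfolding tangent_epigraph_def by auto
  have "\<theta> (zb + (s * c) *\<^sub>R h) \<le> ereal (T + (s * c) * r)" if "0 < s" "s * norm (c *\<^sub>R h) < \<delta>" for s
    using H[of "s * c"] assms(2) that by (simp add: mult.assoc)
  then show ?thesis unfolding tangent_epigraph_def by (simp add: mult.assoc)
qed

lemma tangent_epigraph_closed: "closed tangent_epigraph"
proof -
  let ?epi = "{p. \<theta> (fst p) \<le> ereal (snd p)}"
  have eq: "tangent_epigraph = (\<Inter>s\<in>{0<..}. {p. \<delta> \<le> s * norm (fst p)} \<union>
      (\<lambda>p. (zb + s *\<^sub>R fst p, T + s * snd p)) -` ?epi)"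
    unfolding tangent_epigraph_def by (auto simp: not_less) (meson greaterThan_iff not_less)
  show ?thesis unfolding eq
  proof (intro closed_INT ballI closed_Un)
    fix s :: real
    show "closed {p :: 'a \<times> real. \<delta> \<le> s * norm (fst p)}"
      by (intro closed_Collect_le continuous_intros)
    show "closed ((\<lambda>p :: 'a \<times> real. (zb + s *\<^sub>R fst p, T + s * snd p)) -` ?epi)"
      by (intro continuous_closed_vimage closed_epigraph continuous_intros)
  qed
qed

lemma tangent_epigraph_convex: "convex tangent_epigraph"
proof (rule convexI)
  fix p q :: "'a \<times> real" and u v :: real
  assume p: "p \<in> tangent_epigraph" and q: "q \<in> tangent_epigraph"
    and uv: "0 \<le> u" "0 \<le> v" "u + v = 1"
  obtain h1 r1 h2 r2 where pq: "p = (h1, r1)" "q = (h2, r2)" by fastforce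
  have u: "u = 1 - v" using uv(3) by simp
  define h where "h = u *\<^sub>R h1 + v *\<^sub>R h2"
  define r where "r = u * r1 + v * r2"
  have "\<theta> (zb + s *\<^sub>R h) \<le> ereal (T + s * r)" if s: "0 < s" "s * norm h < \<delta>" for s
  proof -
    txt \<open>Evaluate at a step small enough for both endpoints, then rescale by conicity.\<close>
    define N where "N = norm h1 + norm h2 + 1"
    have N: "N > 0" unfolding N_def by (smt (verit) norm_ge_zero)
    define t where "t = min s (\<delta> / (2 * N))"
    have t: "0 < t" "t \<le> s" unfolding t_def using s N delta_pos by auto
    have "t * N \<le> \<delta> / (2 * N) * N" unfolding t_def using N by (intro mult_right_mono) auto
    also have "\<dots> < \<delta>" using N delta_pos by (simp add: field_simps)
    finally have tN: "t * N < \<delta>" .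
    have "t * norm h1 < \<delta>" "t * norm h2 < \<delta>"
      using tN t(1) unfolding N_def by (smt (verit) mult_left_mono norm_ge_zero)+
    then have "\<theta> (zb + t *\<^sub>R h1) \<le> ereal (T + t * r1)" "\<theta> (zb + t *\<^sub>R h2) \<le> ereal (T + t * r2)"
      using p q pq t(1) unfolding tangent_epigraph_def by auto
    from convex_efunD[OF convex _ _ this, of v] uv
    have "\<theta> (zb + t *\<^sub>R h) \<le> ereal (T + t * r)"
      unfolding h_def r_def u by (simp add: algebra_simps)
    moreover have "t * norm h \<le> s * norm h" using t by (simp add: mult_right_mono)
    then have "norm (t *\<^sub>R h) < \<delta>" "norm ((s / t) *\<^sub>R (t *\<^sub>R h)) < \<delta>"
      using s t by simp_all
    ultimately have "\<theta> (zb + (s / t) *\<^sub>R (t *\<^sub>R h)) \<le> ereal (T + (s / t) * (t * r))"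
      using t by (intro conic_scale[of "t *\<^sub>R h" "s / t" "t * r"]) auto
    then show ?thesis using t by simp
  qed
  then show "u *\<^sub>R p + v *\<^sub>R q \<in> tangent_epigraph"
    unfolding pq h_def r_def tangent_epigraph_def by simp
qed

lemma tangent_epigraph_supporting_halfspace:
  assumes "(x, r0) \<notin> tangent_epigraph"
  obtains a \<alpha> where "\<alpha> \<ge> 0" "\<And>h r. (h, r) \<in> tangent_epigraph \<Longrightarrow> 0 \<le> a \<bullet> h + \<alpha> * r"
    "a \<bullet> x + \<alpha> * r0 < 0"
proof -
  obtain c \<beta> where sep: "c \<bullet> (x, r0) < \<beta>" "\<forall>p\<in>tangent_epigraph. \<beta> < c \<bullet> p"
    using separating_hyperplane_closed_point[OF tangent_epigraph_convex tangent_epigraph_closed assms]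
    by blast
  obtain a \<alpha> where c: "c = (a, \<alpha>)" by fastforce
  have \<beta>: "\<beta> < 0" using sep(2) tangent_epigraph_zero[of 0] by (auto simp: c)
  have supp: "0 \<le> a \<bullet> h + \<alpha> * r" if hr: "(h, r) \<in> tangent_epigraph" for h r
  proof (rule ccontr)
    assume neg: "\<not> 0 \<le> a \<bullet> h + \<alpha> * r"
    define l where "l = \<beta> / (a \<bullet> h + \<alpha> * r)"
    have l: "l > 0" using neg \<beta> by (simp add: l_def divide_neg_neg)
    have "\<beta> < a \<bullet> (l *\<^sub>R h) + \<alpha> * (l * r)"
      using sep(2) tangent_epigraph_cone[OF hr l] by (auto simp: c)
    also have "\<dots> = l * (a \<bullet> h + \<alpha> * r)" by (simp add: algebra_simps)
    also have "\<dots> = \<beta>" using neg unfolding l_def by simp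
    finally show False by simp
  qed
  have "\<alpha> \<ge> 0" using supp[OF tangent_epigraph_zero[of 1]] by simp
  moreover have "a \<bullet> x + \<alpha> * r0 < 0" using sep(1) \<beta> by (simp add: c)
  ultimately show ?thesis using that supp by blast
qed

lemma subgradient_from_supporting_halfspace:
  assumes vb: "vb \<in> subdiff \<theta> zb" and \<alpha>: "\<alpha> \<ge> 0"
    and supp: "\<And>h r. (h, r) \<in> tangent_epigraph \<Longrightarrow> 0 \<le> a \<bullet> h + \<alpha> * r"
  shows "(1 / (\<alpha> + 1)) *\<^sub>R (vb - a) \<in> subdiff \<theta> zb"
proof (rule local_subgradient_is_global[OF convex value_at_zb subdiff_not_MInf[OF vb] delta_pos])
  fix h :: 'a assume h: "norm h < \<delta>"
  show "ereal (T + (1 / (\<alpha> + 1)) *\<^sub>R (vb - a) \<bullet> h) \<le> \<theta> (zb + h)"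
  proof (cases "\<theta> (zb + h)")
    case (real R)
    obtain Tb where "\<theta> zb = ereal Tb" "ereal (Tb + vb \<bullet> ((zb + h) - zb)) \<le> \<theta> (zb + h)"
      using subdiffD[OF vb] by metis
    then have "T + vb \<bullet> h \<le> R" using value_at_zb real by simp
    moreover have "0 \<le> a \<bullet> h + \<alpha> * (R - T)" using supp tangent_epigraph_mem[OF h] real by simp
    ultimately have "(vb - a) \<bullet> h \<le> (\<alpha> + 1) * (R - T)" by (simp add: inner_diff_left algebra_simps)
    then have "(1 / (\<alpha> + 1)) * ((vb - a) \<bullet> h) \<le> R - T" using \<alpha> by (simp add: field_simps)
    then show ?thesis using real by simp
  qed (use subdiff_not_MInf[OF vb] in auto)
qed

text \<open>Max formula along lineality directions: if \<open>x \<bottom> \<partial>\<theta>(zb) - vb\<close>, the directional derivative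
  of \<open>\<theta>\<close> at \<open>zb\<close> in direction \<open>x\<close> is at most \<open>vb \<bullet> x\<close>.\<close>
lemma tangent_epigraph_lineality:
  assumes vb: "vb \<in> subdiff \<theta> zb" and orth: "\<forall>v\<in>subdiff \<theta> zb. (v - vb) \<bullet> x = 0"
  shows "(x, vb \<bullet> x) \<in> tangent_epigraph"
proof (rule ccontr)
  assume "(x, vb \<bullet> x) \<notin> tangent_epigraph"
  then obtain a \<alpha> where \<alpha>: "\<alpha> \<ge> 0"
    and supp: "\<And>h r. (h, r) \<in> tangent_epigraph \<Longrightarrow> 0 \<le> a \<bullet> h + \<alpha> * r"
    and neg: "a \<bullet> x + \<alpha> * (vb \<bullet> x) < 0"
    using tangent_epigraph_supporting_halfspace by metis
  have "(1 / (\<alpha> + 1)) *\<^sub>R (vb - a) \<in> subdiff \<theta> zb"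
    using subgradient_from_supporting_halfspace[OF vb \<alpha> supp] .
  then have "((1 / (\<alpha> + 1)) *\<^sub>R (vb - a) - vb) \<bullet> x = 0" using orth by blast
  then have "(1 / (\<alpha> + 1)) * ((vb - a) \<bullet> x) = vb \<bullet> x"
    by (simp only: inner_diff_left inner_scaleR_left)
  then have "(vb - a) \<bullet> x = (\<alpha> + 1) * (vb \<bullet> x)" using \<alpha> by (simp add: field_simps)
  then have "a \<bullet> x + \<alpha> * (vb \<bullet> x) = 0" by (simp add: inner_diff_left algebra_simps)
  with neg show False by simp
qed

lemma conic_double:
  assumes "norm h < \<delta> / 2" "\<theta> (zb + h) \<le> ereal R"
  shows "\<theta> (zb + 2 *\<^sub>R h) \<le> ereal (T + 2 * (R - T))"
  using conic_scale[of h 2 "R - T"] assms delta_pos by simp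

lemma subgradient_near_zb:
  assumes v: "v \<in> subdiff \<theta> z" and near: "norm (z - zb) < \<delta> / 2"
  shows "v \<in> subdiff \<theta> zb"
proof -
  obtain Z where Z: "\<theta> z = ereal Z" "\<And>y. ereal (Z + v \<bullet> (y - z)) \<le> \<theta> y"
    using subdiffD[OF v] by blast
  define h where "h = z - zb"
  have "ereal (Z + v \<bullet> h) \<le> \<theta> (zb + 2 *\<^sub>R h)"
    using Z(2)[of "zb + 2 *\<^sub>R h"] by (simp add: h_def algebra_simps scaleR_2)
  also have "\<dots> \<le> ereal (T + 2 * (Z - T))"
    using conic_double[of h Z] near Z(1) by (simp add: h_def)
  finally have step: "T + v \<bullet> h \<le> Z" by simp
  show ?thesis
  proof (rule subdiffI[where \<theta> = \<theta>, OF value_at_zb])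
    fix y
    have "T + v \<bullet> (y - zb) \<le> Z + v \<bullet> (y - z)"
      using step by (simp add: h_def inner_diff_right)
    then have "ereal (T + v \<bullet> (y - zb)) \<le> ereal (Z + v \<bullet> (y - z))" by simp
    then show "ereal (T + v \<bullet> (y - zb)) \<le> \<theta> y" using Z(2)[of y] by (rule order.trans)
  qed
qed

lemma subgradients_translate_along_lineality:
  assumes vb: "vb \<in> subdiff \<theta> zb" and orth: "\<forall>v\<in>subdiff \<theta> zb. (v - vb) \<bullet> x = 0"
  obtains \<eta> where "\<eta> > 0" "\<And>z v t. v \<in> subdiff \<theta> z \<Longrightarrow> norm (z - zb) < \<eta> \<Longrightarrow> 0 < t \<Longrightarrow> t < \<eta> \<Longrightarrow>
      v \<in> subdiff \<theta> (z + t *\<^sub>R x)"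
proof -
  define \<eta> where "\<eta> = \<delta> / (2 * (norm x + 1))"
  have N: "2 * (norm x + 1) > 0" by (smt (verit) norm_ge_zero)
  then have \<eta>: "\<eta> > 0" "\<eta> * (2 * (norm x + 1)) = \<delta>" unfolding \<eta>_def using delta_pos by simp_all
  have "\<eta> * 1 \<le> \<eta> * (norm x + 1)" using \<eta>(1) by (intro mult_left_mono) auto
  then have \<eta>_half: "\<eta> \<le> \<delta> / 2" using \<eta>(2) by (simp add: algebra_simps)
  have "v \<in> subdiff \<theta> (z + t *\<^sub>R x)"
    if v: "v \<in> subdiff \<theta> z" and near: "norm (z - zb) < \<eta>" and t: "0 < t" "t < \<eta>" for z v t
  proof -
    obtain Z where Z: "\<theta> z = ereal Z" using subdiffD[OF v] by blast
    have "v \<in> subdiff \<theta> zb" using subgradient_near_zb[OF v] near \<eta>_half by simp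
    then have vx: "v \<bullet> x = vb \<bullet> x" using orth by (simp add: inner_diff_left)
    txt \<open>Bound \<open>\<theta>\<close> at \<open>zb + 2(z - zb)\<close> by conicity and at \<open>zb + 2tx\<close> by the max formula;
      \<open>z + tx\<close> is their midpoint.\<close>
    have up1: "\<theta> (zb + 2 *\<^sub>R (z - zb)) \<le> ereal (T + 2 * (Z - T))"
      using conic_double[of "z - zb" Z] near \<eta>_half Z by simp
    have "(2 * t) * norm x \<le> (2 * t) * (norm x + 1)" using t by simp
    also have "\<dots> < (2 * \<eta>) * (norm x + 1)"
      using t by (intro mult_strict_right_mono) (auto, smt (verit) norm_ge_zero)
    also have "\<dots> = \<delta>" using \<eta>(2) by (simp add: algebra_simps)
    finally have "(2 * t) * norm x < \<delta>" .
    moreover have "\<forall>s>0. s * norm x < \<delta> \<longrightarrow> \<theta> (zb + s *\<^sub>R x) \<le> ereal (T + s * (vb \<bullet> x))"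
      using tangent_epigraph_lineality[OF vb orth] unfolding tangent_epigraph_def by simp
    ultimately have up2: "\<theta> (zb + (2 * t) *\<^sub>R x) \<le> ereal (T + (2 * t) * (vb \<bullet> x))"
      using t by simp
    have "\<theta> ((1 - 1/2) *\<^sub>R (zb + 2 *\<^sub>R (z - zb)) + (1/2) *\<^sub>R (zb + (2 * t) *\<^sub>R x))
        \<le> ereal ((1 - 1/2) * (T + 2 * (Z - T)) + (1/2) * (T + (2 * t) * (vb \<bullet> x)))"
      by (rule convex_efunD[OF convex _ _ up1 up2]) auto
    moreover have "(1 - 1/2) *\<^sub>R (zb + 2 *\<^sub>R (z - zb)) + (1/2) *\<^sub>R (zb + (2 * t) *\<^sub>R x) = z + t *\<^sub>R x"
      by (simp add: algebra_simps scaleR_2 flip: scaleR_add_left)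
    moreover have "(1 - 1/2) * (T + 2 * (Z - T)) + (1/2) * (T + (2 * t) * (vb \<bullet> x)) = Z + v \<bullet> (t *\<^sub>R x)"
      using vx by (simp add: algebra_simps)
    ultimately have "\<theta> (z + t *\<^sub>R x) \<le> ereal (Z + v \<bullet> (t *\<^sub>R x))" by simp
    then show ?thesis using subgradient_persists[OF v Z] by blast
  qed
  with \<eta>(1) that show ?thesis by blast
qed

lemma regular_normals_nonpositive_on_lineality:
  assumes vb: "vb \<in> subdiff \<theta> zb" and orth: "\<forall>v\<in>subdiff \<theta> zb. (v - vb) \<bullet> x = 0"
  obtains \<eta> where "\<eta> > 0" "\<And>z v q. v \<in> subdiff \<theta> z \<Longrightarrow> norm (z - zb) < \<eta> \<Longrightarrow>
      q \<in> regular_normal {(x, y). y \<in> subdiff \<theta> x} (z, v) \<Longrightarrow> fst q \<bullet> x \<le> 0"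
proof -
  obtain \<eta> where \<eta>: "\<eta> > 0" and move: "\<And>z v t. v \<in> subdiff \<theta> z \<Longrightarrow> norm (z - zb) < \<eta> \<Longrightarrow>
      0 < t \<Longrightarrow> t < \<eta> \<Longrightarrow> v \<in> subdiff \<theta> (z + t *\<^sub>R x)"
    using subgradients_translate_along_lineality[OF vb orth] by metis
  have "fst q \<bullet> x \<le> 0" if "v \<in> subdiff \<theta> z" "norm (z - zb) < \<eta>"
    "q \<in> regular_normal {(x, y). y \<in> subdiff \<theta> x} (z, v)" for z v q
  proof -
    have "q \<bullet> (x, 0) \<le> 0"
      by (rule regular_normal_direction[OF that(3) \<eta>]) (use move that in simp)
    then show ?thesis by (cases q) simp
  qed
  with \<eta> that show ?thesis by blast
qed

lemma second_subdiff_subset_parallel_subspace: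
  assumes vb: "vb \<in> subdiff \<theta> zb"
  shows "second_subdiff \<theta> zb vb 0 \<subseteq> parallel_subspace (subdiff \<theta> zb)"
proof
  let ?G = "{(x, y). y \<in> subdiff \<theta> x}"
  fix u assume "u \<in> second_subdiff \<theta> zb vb 0"
  then have "\<exists>ps qs. (\<forall>k. ps k \<in> ?G \<and> qs k \<in> regular_normal ?G (ps k))
      \<and> ps \<longlonglongrightarrow> (zb, vb) \<and> qs \<longlonglongrightarrow> (u, 0)"
    unfolding second_subdiff_def coderiv_def limiting_normal_def by simp
  then obtain ps qs where pq: "\<forall>k. ps k \<in> ?G \<and> qs k \<in> regular_normal ?G (ps k)"
    "ps \<longlonglongrightarrow> (zb, vb)" "qs \<longlonglongrightarrow> (u, 0)"
    by blast
  have half: "u \<bullet> x \<le> 0" if orth: "\<forall>v\<in>subdiff \<theta> zb. (v - vb) \<bullet> x = 0" for x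
  proof -
    obtain \<eta> where \<eta>: "\<eta> > 0" and nonpos: "\<And>z v q. v \<in> subdiff \<theta> z \<Longrightarrow> norm (z - zb) < \<eta> \<Longrightarrow>
        q \<in> regular_normal ?G (z, v) \<Longrightarrow> fst q \<bullet> x \<le> 0"
      using regular_normals_nonpositive_on_lineality[OF vb orth] by metis
    have "(\<lambda>k. fst (ps k)) \<longlonglongrightarrow> zb" using tendsto_fst[OF pq(2)] by simp
    then have "\<forall>\<^sub>F k in sequentially. norm (fst (ps k) - zb) < \<eta>"
      using \<eta> by (auto simp: tendsto_iff dist_norm)
    then have "\<forall>\<^sub>F k in sequentially. fst (qs k) \<bullet> x \<le> 0"
    proof (rule eventually_mono)
      fix k assume "norm (fst (ps k) - zb) < \<eta>"
      then show "fst (qs k) \<bullet> x \<le> 0"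
        using nonpos[of "snd (ps k)" "fst (ps k)" "qs k"] spec[OF pq(1), of k] by (cases "ps k") auto
    qed
    moreover have "(\<lambda>k. fst (qs k) \<bullet> x) \<longlonglongrightarrow> u \<bullet> x"
      using tendsto_inner[OF tendsto_fst[OF pq(3)] tendsto_const] by simp
    ultimately show ?thesis by (intro tendsto_upperbound) auto
  qed
  show "u \<in> parallel_subspace (subdiff \<theta> zb)"
  proof (rule parallel_subspace_by_orthogonality[OF vb])
    fix x assume orth: "\<forall>v\<in>subdiff \<theta> zb. (v - vb) \<bullet> x = 0"
    then have "\<forall>v\<in>subdiff \<theta> zb. (v - vb) \<bullet> (- x) = 0" by simp
    then show "u \<bullet> x = 0" using half[OF orth] half[of "- x"] by simp
  qed
qed

end

theorem mainTheorem6: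
  fixes \<theta> :: "real ^ 'm \<Rightarrow> ereal" and zb vb :: "real ^ 'm"
  assumes "piecewise_linear \<theta>"
    and "zb \<in> dom_subdiff \<theta>"
    and "vb \<in> subdiff \<theta> zb"
  shows "second_subdiff \<theta> zb vb 0 = parallel_subspace (subdiff \<theta> zb)"
proof -
  obtain T where T: "\<theta> zb = ereal T" using subdiffD[OF assms(3)] by blast
  obtain \<delta> where "\<delta> > 0" "\<And>h s r. norm h < \<delta> \<Longrightarrow> 0 < s \<Longrightarrow> s \<le> 1 \<Longrightarrow>
      \<theta> (zb + s *\<^sub>R h) \<le> ereal (T + s * r) \<longleftrightarrow> \<theta> (zb + h) \<le> ereal (T + r)"
    using piecewise_linear_locally_conic[OF assms(1) T] by metis
  moreover have "convex_efun \<theta>" using assms(1) unfolding piecewise_linear_def by blast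
  ultimately interpret locally_conic \<theta> zb T \<delta>
    using piecewise_linear_closed_epigraph[OF assms(1)] T by unfold_locales auto
  show ?thesis
    using second_subdiff_subset_parallel_subspace[OF assms(3)]
      parallel_subspace_subset_second_subdiff[OF assms(3)] by blast
qed

end
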